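(* Let $d\ge1$ and $0\le r<d$ be integers, and let $\zeta_{2d}=e^{\pi \mathrm{i}/d}$. Then $\operatorname{num}(r,\zeta_{2d})\neq 0$.
   Context: A partition $\lambda$ of $n\ge 0$ (written $\lambda\vdash n$) is a finite nonincreasing sequence of positive integers summing to $n$; $m_\lambda(i)$ denotes the number of parts of $\lambda$ equal to $i$. For $\lambda\vdash n$ define $h_\lambda(x)=\prod_{i\ge1}(1+x^i)^{\lfloor n/i\rfloor-m_\lambda(i)}\in\mathbb{Z}[x]$. Let $G(n,x)=\gcd\{h_\lambda(x):\lambda\vdash n\}$ in $\mathbb{Z}[x]$ (normalized with positive leading coefficient) and $\operatorname{num}(n,x)=\frac{1}{G(n,x)}\sum_{\lambda\vdash n}h_\lambda(x)$. Conventions for $n=0$: $G(0,x)=1$, $h_\emptyset(x)=1$, $\operatorname{num}(0,x)=1$. *)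

theory Defs
  imports Complex_Main "HOL-Computational_Algebra.Computational_Algebra"
begin

definition partitions :: "nat \<Rightarrow> nat list set" where
  "partitions n = {lam. sorted_wrt (\<ge>) lam \<and> (\<forall>p\<in>set lam. p > 0) \<and> sum_list lam = n}"

definition mult_part :: "nat list \<Rightarrow> nat \<Rightarrow> nat" where
  "mult_part lam i = count_list lam i"

text \<open>h_lambda(x) for lambda a partition of n = sum_list lambda; factors with i > n are 1.\<close>
definition h_poly :: "nat list \<Rightarrow> int poly" where
  "h_poly lam = (let n = sum_list lam in
     \<Prod>i\<in>{1..n}. (1 + monom 1 i) ^ (n div i - mult_part lam i))"

definition G_poly :: "nat \<Rightarrow> int poly" where
  "G_poly n = Gcd (h_poly ` partitions n)"

definition num_poly :: "nat \<Rightarrow> int poly" where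
  "num_poly n = (\<Sum>lam\<in>partitions n. h_poly lam) div G_poly n"

end

theory Submission
  imports Defs
begin

text \<open>
  Since G(r,x) num(r,x) is the sum of all h_\<lambda>(x), it suffices to show that this sum does not
  vanish at \<zeta> = exp(2 i \<theta>) with \<theta> = \<pi>/(2d). Each factor 1 + \<zeta>^k = exp(i k \<theta>) 2 cos(k \<theta>)
  with k \<le> r < d is a positive real times a power of exp(i \<theta>), and the total exponent of
  exp(i \<theta>) in h_\<lambda>(\<zeta>) is \<Sum>_k k \<lfloor>r/k\<rfloor> - r, independent of \<lambda> because \<Sum>_k k m_\<lambda>(k) = r.
  So the sum is a unit times a sum of positive reals.
\<close>

lemma map_poly_of_int_add:
  "map_poly (of_int :: int \<Rightarrow> 'a::comm_ring_1) (p + q) = map_poly of_int p + map_poly of_int q"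
  by (rule poly_eqI) (simp add: coeff_map_poly)

lemma map_poly_of_int_mult:
  "map_poly (of_int :: int \<Rightarrow> 'a::comm_ring_1) (p * q) = map_poly of_int p * map_poly of_int q"
  by (rule poly_eqI) (simp add: coeff_map_poly coeff_mult)

lemma map_poly_of_int_power:
  "map_poly (of_int :: int \<Rightarrow> 'a::comm_ring_1) (p ^ n) = map_poly of_int p ^ n"
  by (induction n) (simp_all add: map_poly_of_int_mult)

lemma map_poly_of_int_prod:
  "map_poly (of_int :: int \<Rightarrow> 'a::comm_ring_1) (\<Prod>i\<in>A. f i) = (\<Prod>i\<in>A. map_poly of_int (f i))"
  by (induction A rule: infinite_finite_induct) (simp_all add: map_poly_of_int_mult)

lemma map_poly_of_int_sum:
  "map_poly (of_int :: int \<Rightarrow> 'a::comm_ring_1) (\<Sum>i\<in>A. f i) = (\<Sum>i\<in>A. map_poly of_int (f i))"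
  by (induction A rule: infinite_finite_induct) (simp_all add: map_poly_of_int_add)

lemma one_plus_exp_double:
  fixes s :: real
  shows "1 + exp (2 * of_real s * \<i>) = exp (of_real s * \<i>) * of_real (2 * cos s)"
proof -
  have "cos (s * 2) = 2 * cos s ^ 2 - 1" "sin (s * 2) = 2 * sin s * cos s"
    using cos_double_cos[of s] sin_double[of s] by (simp_all add: mult.commute)
  then show ?thesis
    by (simp add: complex_eq_iff Re_exp Im_exp power2_eq_square algebra_simps)
qed

lemma length_le_sum_list_pos:
  "\<forall>p\<in>set xs. (p::nat) > 0 \<Longrightarrow> length xs \<le> sum_list xs"
  by (induction xs) auto

lemma member_le_sum_list_nat: "(x::nat) \<in> set xs \<Longrightarrow> x \<le> sum_list xs"
  by (induction xs) auto

lemma set_partition_subset: "lam \<in> partitions n \<Longrightarrow> set lam \<subseteq> {1..n}"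
  unfolding partitions_def using member_le_sum_list_nat by (auto simp: Suc_le_eq)

lemma finite_partitions: "finite (partitions n)"
proof (rule finite_subset)
  show "partitions n \<subseteq> {xs. set xs \<subseteq> {0..n} \<and> length xs \<le> n}"
    using set_partition_subset length_le_sum_list_pos by (fastforce simp: partitions_def)
  show "finite {xs. set xs \<subseteq> {0..n} \<and> length xs \<le> n}"
    by (rule finite_lists_length_le) simp
qed

lemma replicate_one_in_partitions: "replicate n 1 \<in> partitions n"
  unfolding partitions_def by (auto simp: sorted_wrt_iff_nth_less sum_list_replicate)

lemma sum_parts_count_list:
  assumes "lam \<in> partitions n"
  shows "(\<Sum>i\<in>{1..n}. i * count_list lam i) = n"
proof -
  have "n = sum_list (map (\<lambda>x. x) lam)"
    using assms by (simp add: partitions_def)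
  also have "\<dots> = (\<Sum>x\<in>set lam. x * count_list lam x)"
    unfolding sum_list_map_eq_sum_count by (simp add: mult.commute)
  also have "\<dots> = (\<Sum>i\<in>{1..n}. i * count_list lam i)"
    by (rule sum.mono_neutral_left)
      (use set_partition_subset[OF assms] in \<open>auto simp: count_list_0_iff\<close>)
  finally show ?thesis by simp
qed

lemma count_list_partition_le_div:
  assumes "lam \<in> partitions n" "i \<in> {1..n}"
  shows "count_list lam i \<le> n div i"
proof -
  have "i * count_list lam i \<le> (\<Sum>i\<in>{1..n}. i * count_list lam i)"
    by (rule member_le_sum) (use assms in auto)
  then have "i * count_list lam i \<le> n"
    using sum_parts_count_list[OF assms(1)] by simp
  then show ?thesis
    using assms(2) by (simp add: less_eq_div_iff_mult_less_eq mult.commute)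
qed

lemma sum_weighted_h_exponents:
  assumes "lam \<in> partitions n"
  shows "(\<Sum>i\<in>{1..n}. i * (n div i - count_list lam i)) = (\<Sum>i\<in>{1..n}. i * (n div i)) - n"
proof -
  have "(\<Sum>i\<in>{1..n}. i * (n div i - count_list lam i)) + (\<Sum>i\<in>{1..n}. i * count_list lam i)
      = (\<Sum>i\<in>{1..n}. i * (n div i))"
    unfolding sum.distrib[symmetric]
    by (rule sum.cong) (use count_list_partition_le_div[OF assms] in \<open>auto simp: diff_mult_distrib2\<close>)
  then show ?thesis
    using sum_parts_count_list[OF assms] by simp
qed

lemma poly_h_poly_exp:
  fixes \<theta> :: real
  assumes "lam \<in> partitions n"
  shows "poly (map_poly of_int (h_poly lam)) (exp (2 * of_real \<theta> * \<i>))
    = exp (of_real \<theta> * \<i>) ^ ((\<Sum>i\<in>{1..n}. i * (n div i)) - n)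
      * of_real (\<Prod>i\<in>{1..n}. (2 * cos (i * \<theta>)) ^ (n div i - count_list lam i))"
proof -
  define w where "w = exp (of_real \<theta> * \<i>)"
  define e where "e = (\<lambda>i. n div i - count_list lam i)"
  have one_plus_power: "1 + exp (2 * of_real \<theta> * \<i>) ^ i = w ^ i * of_real (2 * cos (i * \<theta>))"
    for i :: nat
    using one_plus_exp_double[of "i * \<theta>"]
    by (simp add: w_def exp_of_nat_mult[symmetric] algebra_simps)
  have "poly (map_poly of_int (h_poly lam)) (exp (2 * of_real \<theta> * \<i>))
      = (\<Prod>i\<in>{1..n}. (w ^ i * of_real (2 * cos (i * \<theta>))) ^ e i)"
    using assms
    by (simp add: h_poly_def partitions_def mult_part_def e_def map_poly_of_int_prod
        map_poly_of_int_power map_poly_of_int_add map_poly_monom poly_prod poly_monom one_plus_power)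
  also have "\<dots> = w ^ (\<Sum>i\<in>{1..n}. i * e i) * of_real (\<Prod>i\<in>{1..n}. (2 * cos (i * \<theta>)) ^ e i)"
    by (simp add: prod.distrib power_mult_distrib power_mult power_sum)
  finally show ?thesis
    unfolding e_def sum_weighted_h_exponents[OF assms] w_def .
qed

lemma poly_sum_h_poly_exp_nonzero:
  fixes \<theta> :: real
  assumes "n * \<bar>\<theta>\<bar> < pi / 2"
  shows "poly (map_poly of_int (\<Sum>lam\<in>partitions n. h_poly lam)) (exp (2 * of_real \<theta> * \<i>)) \<noteq> 0"
proof -
  define A where
    "A = (\<lambda>lam. \<Prod>i\<in>{1..n}. (2 * cos (i * \<theta>)) ^ (n div i - count_list lam i))"
  have cos_pos: "cos (i * \<theta>) > 0" if "i \<in> {1..n}" for i :: nat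
  proof (rule cos_gt_zero_pi)
    have "\<bar>i * \<theta>\<bar> \<le> n * \<bar>\<theta>\<bar>"
      using that by (simp add: abs_mult mult_right_mono)
    then show "- (pi / 2) < i * \<theta>" "i * \<theta> < pi / 2"
      using assms by linarith+
  qed
  have "(\<Sum>lam\<in>partitions n. A lam) > 0"
    by (rule sum_pos)
      (use finite_partitions replicate_one_in_partitions cos_pos in \<open>auto simp: A_def intro!: prod_pos\<close>)
  moreover have "poly (map_poly of_int (\<Sum>lam\<in>partitions n. h_poly lam)) (exp (2 * of_real \<theta> * \<i>))
      = exp (of_real \<theta> * \<i>) ^ ((\<Sum>i\<in>{1..n}. i * (n div i)) - n) * of_real (\<Sum>lam\<in>partitions n. A lam)"
    by (simp add: map_poly_of_int_sum poly_sum poly_h_poly_exp A_def sum_distrib_left)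
  ultimately show ?thesis
    by (simp del: of_real_sum)
qed

lemma num_poly_mult_G_poly: "num_poly n * G_poly n = (\<Sum>lam\<in>partitions n. h_poly lam)"
proof -
  have "G_poly n dvd (\<Sum>lam\<in>partitions n. h_poly lam)"
    unfolding G_poly_def by (intro dvd_sum Gcd_dvd) blast
  then show ?thesis
    by (simp add: num_poly_def)
qed

theorem lemma5:
  fixes d r :: nat
  assumes "d \<ge> 1" and "r < d"
  shows "poly (map_poly of_int (num_poly r)) (exp (complex_of_real pi * \<i> / of_nat d)) \<noteq> (0::complex)"
proof -
  define \<theta> where "\<theta> = pi / (2 * d)"
  have root: "exp (complex_of_real pi * \<i> / of_nat d) = exp (2 * of_real \<theta> * \<i>)"
    using assms(1) by (simp add: \<theta>_def field_simps)
  have "r * \<bar>\<theta>\<bar> < pi / 2"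
    using assms by (simp add: \<theta>_def field_simps)
  then have "poly (map_poly of_int (num_poly r * G_poly r)) (exp (2 * of_real \<theta> * \<i>)) \<noteq> (0::complex)"
    unfolding num_poly_mult_G_poly by (rule poly_sum_h_poly_exp_nonzero)
  then show ?thesis
    unfolding root map_poly_of_int_mult by simp
qed

end
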